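(* Let $(m_j)_{j=1}^{\infty}$ be a strictly increasing sequence of positive integers with $m_{j+1}\ge q\,m_j$ for all $j$, where $q\ge 2$. Let $A_j>0$, $B_j\in\mathbb{C}$ with $A_j^2-|B_j|^2=1$, and let $M,N\in\mathbb{N}_0$ with $M<N$. Expand each entry of the matrix product $$\prod_{j=M+1}^{N}\begin{bmatrix} A_j & B_j e^{2\pi i m_j t}\\ \overline{B_j}e^{-2\pi i m_j t} & A_j\end{bmatrix}$$ (factors in increasing order of $j$ from left to right) formally as a sum of products, one factor taken from each matrix, so that each term is a constant times $e^{2\pi i n t}$ for some integer frequency $n$. Then, within each entry, the frequencies of distinct terms of this expansion are mutually separated by at least $m_{M+1}$; i.e. any two distinct terms have frequencies $n\ne n'$ with $|n-n'|\ge m_{M+1}$.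
   Context: The frequency of a term is the integer $n$ for which the term is a constant multiple of $e^{2\pi i n t}$; e.g. $B_{M+1}e^{2\pi i m_{M+1}t}\cdot A_{M+2}$ has frequency $m_{M+1}$. *)

theory Defs
  imports "HOL-Analysis.Analysis"
begin

definition mat_entry :: "(nat \<Rightarrow> real) \<Rightarrow> (nat \<Rightarrow> complex) \<Rightarrow> (nat \<Rightarrow> nat)
    \<Rightarrow> nat \<Rightarrow> nat \<Rightarrow> nat \<Rightarrow> real \<Rightarrow> complex" where
  "mat_entry A B m j a b t =
     (if a = 0 \<and> b = 0 then complex_of_real (A j)
      else if a = 0 \<and> b = 1 then B j * exp (2 * pi * \<i> * of_nat (m j) * t)
      else if a = 1 \<and> b = 0 then cnj (B j) * exp (- 2 * pi * \<i> * of_nat (m j) * t)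
      else complex_of_real (A j))"

definition entry_freq :: "(nat \<Rightarrow> nat) \<Rightarrow> nat \<Rightarrow> nat \<Rightarrow> nat \<Rightarrow> int" where
  "entry_freq m j a b =
     (if a = 0 \<and> b = 1 then int (m j) else if a = 1 \<and> b = 0 then - int (m j) else 0)"

text \<open>A term of the formal expansion of entry (r,c) of the product of factors
  M+1,...,N is determined by an index path s with s M = r, s N = c and
  s j \<in> {0,1}; factor j contributes its entry (s (j-1), s j).\<close>
definition valid_path :: "nat \<Rightarrow> nat \<Rightarrow> nat \<Rightarrow> nat \<Rightarrow> (nat \<Rightarrow> nat) \<Rightarrow> bool" where
  "valid_path M N r c s \<longleftrightarrow> s M = r \<and> s N = c \<and> (\<forall>j\<in>{M..N}. s j \<in> {0, 1})"

definition path_term :: "(nat \<Rightarrow> real) \<Rightarrow> (nat \<Rightarrow> complex) \<Rightarrow> (nat \<Rightarrow> nat)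
    \<Rightarrow> nat \<Rightarrow> nat \<Rightarrow> (nat \<Rightarrow> nat) \<Rightarrow> real \<Rightarrow> complex" where
  "path_term A B m M N s t = (\<Prod>j\<in>{M+1..N}. mat_entry A B m j (s (j - 1)) (s j) t)"

definition path_freq :: "(nat \<Rightarrow> nat) \<Rightarrow> nat \<Rightarrow> nat \<Rightarrow> (nat \<Rightarrow> nat) \<Rightarrow> int" where
  "path_freq m M N s = (\<Sum>j\<in>{M+1..N}. entry_freq m j (s (j - 1)) (s j))"

end

theory Submission
  imports Defs
begin

text \<open>A term of the expansion of entry \<open>(r, c)\<close> is a 0/1 index path \<open>s\<close> from \<open>r\<close> to \<open>c\<close>,
  with frequency \<open>\<Sum>j. m j * (s j - s (j - 1))\<close>. For two such paths the difference
  \<open>e j = s j - s' j \<in> {-1, 0, 1}\<close> vanishes at both ends, so summation by parts turns the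
  frequency difference into \<open>-(\<Sum>M < j < N. (m (j + 1) - m j) * e j)\<close>. Lacunarity gives
  \<open>m (j + 1) - m j \<ge> m j\<close>, which exceeds the total \<open>m j - m (M + 1)\<close> of all earlier
  increments by \<open>m (M + 1)\<close>; so the term of the last nonzero \<open>e j\<close> keeps the sum at least
  \<open>m (M + 1)\<close> away from 0.\<close>

lemma mat_entry_eq_exp:
  assumes "a \<in> {0,1}" "b \<in> {0,1}"
  shows "mat_entry A B m j a b t =
    (if a = b then complex_of_real (A j) else if a = 0 then B j else cnj (B j))
      * exp (2 * pi * \<i> * of_int (entry_freq m j a b) * t)"
  using assms by (auto simp: mat_entry_def entry_freq_def)

lemma entry_freq_eq:
  assumes "a \<in> {0,1}" "b \<in> {0,1}"
  shows "entry_freq m j a b = int (m j) * (int b - int a)"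
  using assms by (auto simp: entry_freq_def)

lemma valid_path_step:
  assumes "valid_path M N r c s" "j \<in> {M+1..N}"
  shows "s (j - 1) \<in> {0,1}" "s j \<in> {0,1}"
proof -
  have "j - 1 \<in> {M..N}" "j \<in> {M..N}" using assms(2) by auto
  then show "s (j - 1) \<in> {0,1}" "s j \<in> {0,1}" using assms(1) unfolding valid_path_def by blast+
qed

lemma path_term_eq_exp:
  assumes "valid_path M N r c s"
  shows "\<exists>k. \<forall>t. path_term A B m M N s t = k * exp (2 * pi * \<i> * of_int (path_freq m M N s) * t)"
proof (intro exI allI)
  fix t
  define coeff where "coeff j = (if s (j - 1) = s j then complex_of_real (A j)
      else if s (j - 1) = 0 then B j else cnj (B j))" for j
  have "path_term A B m M N s t =
      (\<Prod>j\<in>{M+1..N}. coeff j * exp (2 * pi * \<i> * of_int (entry_freq m j (s (j - 1)) (s j)) * t))"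
    unfolding path_term_def coeff_def
    using valid_path_step[OF assms] by (intro prod.cong refl mat_entry_eq_exp) auto
  also have "\<dots> = (\<Prod>j\<in>{M+1..N}. coeff j) *
      exp (\<Sum>j\<in>{M+1..N}. 2 * pi * \<i> * of_int (entry_freq m j (s (j - 1)) (s j)) * t)"
    by (simp add: prod.distrib exp_sum)
  also have "(\<Sum>j\<in>{M+1..N}. 2 * pi * \<i> * of_int (entry_freq m j (s (j - 1)) (s j)) * t)
      = 2 * pi * \<i> * of_int (path_freq m M N s) * t"
    unfolding path_freq_def of_int_sum sum_distrib_left sum_distrib_right by (simp add: mult.assoc)
  finally show "path_term A B m M N s t =
      (\<Prod>j\<in>{M+1..N}. coeff j) * exp (2 * pi * \<i> * of_int (path_freq m M N s) * t)" .
qed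

lemma path_freq_diff:
  assumes "valid_path M N r c s" "valid_path M N r c s'"
  shows "path_freq m M N s - path_freq m M N s' =
    (\<Sum>j\<in>{M+1..N}. int (m j) *
       ((int (s j) - int (s' j)) - (int (s (j - 1)) - int (s' (j - 1)))))"
  unfolding path_freq_def sum_subtractf[symmetric]
  using valid_path_step[OF assms(1)] valid_path_step[OF assms(2)]
  by (intro sum.cong refl) (simp add: entry_freq_eq algebra_simps)

lemma sum_by_parts_vanishing_ends:
  fixes w e :: "nat \<Rightarrow> 'a::comm_ring_1"
  assumes "M < N" "e M = 0" "e N = 0"
  shows "(\<Sum>j\<in>{M+1..N}. w j * (e j - e (j - 1))) = - (\<Sum>j\<in>{M+1..<N}. (w (Suc j) - w j) * e j)"
proof -
  obtain P where N: "N = Suc P" using assms(1) by (cases N) auto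
  have "(\<Sum>j\<in>{M+1..N}. w j * e j) = (\<Sum>j\<in>{M+1..<N}. w j * e j)"
    using assms by (simp add: N atLeastLessThanSuc_atLeastAtMost[symmetric] sum.atLeast_Suc_lessThan)
  moreover have "(\<Sum>j\<in>{M+1..N}. w j * e (j - 1)) = (\<Sum>j\<in>{M..<N}. w (Suc j) * e j)"
    unfolding N Suc_eq_plus1[symmetric] sum.shift_bounds_cl_Suc_ivl
    by (simp add: atLeastLessThanSuc_atLeastAtMost)
  moreover have "\<dots> = (\<Sum>j\<in>{M+1..<N}. w (Suc j) * e j)"
    using assms by (simp add: sum.atLeast_Suc_lessThan)
  ultimately show ?thesis
    by (simp add: right_diff_distrib left_diff_distrib sum_subtractf)
qed

lemma weighted_increment_sum_abs_le:
  fixes m :: "nat \<Rightarrow> nat" and e :: "nat \<Rightarrow> int"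
  assumes mono: "\<And>j. j \<in> {n..<p} \<Longrightarrow> m j \<le> m (Suc j)"
    and e: "\<And>j. j \<in> {n..<p} \<Longrightarrow> \<bar>e j\<bar> \<le> 1"
    and "n \<le> p"
  shows "\<bar>\<Sum>j\<in>{n..<p}. (int (m (Suc j)) - int (m j)) * e j\<bar> \<le> int (m p) - int (m n)"
proof -
  have "\<bar>\<Sum>j\<in>{n..<p}. (int (m (Suc j)) - int (m j)) * e j\<bar>
      \<le> (\<Sum>j\<in>{n..<p}. \<bar>(int (m (Suc j)) - int (m j)) * e j\<bar>)"
    by (rule sum_abs)
  also have "\<dots> \<le> (\<Sum>j\<in>{n..<p}. int (m (Suc j)) - int (m j))"
  proof (rule sum_mono)
    fix j assume "j \<in> {n..<p}"
    with mono e show "\<bar>(int (m (Suc j)) - int (m j)) * e j\<bar> \<le> int (m (Suc j)) - int (m j)"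
      by (auto simp: abs_mult intro: mult_left_le)
  qed
  also have "\<dots> = int (m p) - int (m n)"
    using sum_Suc_diff'[OF \<open>n \<le> p\<close>] .
  finally show ?thesis .
qed

lemma lacunary_weighted_increment_sum_abs_ge:
  fixes m :: "nat \<Rightarrow> nat" and e :: "nat \<Rightarrow> int"
  assumes "\<And>j. j \<in> {n..<p} \<Longrightarrow> 2 * m j \<le> m (Suc j)"
    and "\<And>j. j \<in> {n..<p} \<Longrightarrow> \<bar>e j\<bar> \<le> 1"
    and "i \<in> {n..<p}" "e i \<noteq> 0"
  shows "int (m n) \<le> \<bar>\<Sum>j\<in>{n..<p}. (int (m (Suc j)) - int (m j)) * e j\<bar>"
  using assms
proof (induction p)
  case 0
  then show ?case by simp
next
  case (Suc p)
  let ?S = "\<Sum>j\<in>{n..<p}. (int (m (Suc j)) - int (m j)) * e j"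
  have "n \<le> p" using Suc.prems(3) by simp
  then have sum_Suc: "(\<Sum>j\<in>{n..<Suc p}. (int (m (Suc j)) - int (m j)) * e j)
      = ?S + (int (m (Suc p)) - int (m p)) * e p"
    by simp
  show ?case
  proof (cases "e p = 0")
    case True
    with Suc.prems have "i \<in> {n..<p}" by (auto simp: less_Suc_eq)
    with True Suc.IH Suc.prems show ?thesis unfolding sum_Suc by simp
  next
    case False
    have "\<bar>?S\<bar> \<le> int (m p) - int (m n)"
      using Suc.prems(1,2) \<open>n \<le> p\<close> by (intro weighted_increment_sum_abs_le) force+
    moreover have "2 * m p \<le> m (Suc p)" using Suc.prems(1) \<open>n \<le> p\<close> by simp
    moreover have "\<bar>e p\<bar> = 1" using False Suc.prems(2)[of p] \<open>n \<le> p\<close> by simp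
    ultimately show ?thesis
      unfolding sum_Suc by (auto simp: abs_if split: if_splits)
  qed
qed

lemma path_freq_diff_abs_ge:
  assumes vs: "valid_path M N r c s" and vs': "valid_path M N r c s'"
    and "M < N" and doubling: "\<And>j. j \<in> {M+1..<N} \<Longrightarrow> 2 * m j \<le> m (Suc j)"
    and differ: "\<exists>j\<in>{M..N}. s j \<noteq> s' j"
  shows "int (m (M + 1)) \<le> \<bar>path_freq m M N s - path_freq m M N s'\<bar>"
proof -
  obtain i where i: "i \<in> {M..N}" "s i \<noteq> s' i" using differ by blast
  define e where "e j = int (s j) - int (s' j)" for j
  have ends: "e M = 0" "e N = 0" using vs vs' by (simp_all add: e_def valid_path_def)
  have "e i \<noteq> 0" using i(2) by (simp add: e_def)
  moreover from this ends have "i \<noteq> M" "i \<noteq> N" by auto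
  with i(1) have "i \<in> {M+1..<N}" by auto
  moreover have "\<bar>e j\<bar> \<le> 1" if "j \<in> {M+1..<N}" for j
  proof -
    have "s j \<in> {0,1}" "s' j \<in> {0,1}"
      using that vs vs' unfolding valid_path_def by auto
    then show ?thesis by (auto simp: e_def)
  qed
  moreover have "path_freq m M N s - path_freq m M N s' =
      - (\<Sum>j\<in>{M+1..<N}. (int (m (Suc j)) - int (m j)) * e j)"
    unfolding path_freq_diff[OF vs vs'] e_def[symmetric]
    using sum_by_parts_vanishing_ends[OF \<open>M < N\<close> ends] .
  ultimately show ?thesis
    using lacunary_weighted_increment_sum_abs_ge[of "M+1" N m e i] doubling by simp
qed

theorem lemma2p1:
  fixes m :: "nat \<Rightarrow> nat" and q :: real and A :: "nat \<Rightarrow> real" and B :: "nat \<Rightarrow> complex"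
    and M N :: nat
  assumes m_pos: "\<forall>j\<ge>1. m j > 0"
    and m_strict: "\<forall>j\<ge>1. m j < m (Suc j)"
    and m_lac: "\<forall>j\<ge>1. real (m (Suc j)) \<ge> q * real (m j)"
    and q: "q \<ge> 2"
    and A_pos: "\<forall>j\<ge>1. A j > 0"
    and AB: "\<forall>j\<ge>1. (A j)\<^sup>2 - (cmod (B j))\<^sup>2 = 1"
    and MN: "M < N"
  shows "\<forall>r\<in>{0,1}. \<forall>c\<in>{0,1}. \<forall>s s'.
           valid_path M N r c s \<longrightarrow> valid_path M N r c s' \<longrightarrow>
           (\<exists>k. \<forall>t. path_term A B m M N s t = k * exp (2 * pi * \<i> * of_int (path_freq m M N s) * t)) \<and>
           ((\<exists>j\<in>{M..N}. s j \<noteq> s' j) \<longrightarrow>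
              path_freq m M N s \<noteq> path_freq m M N s' \<and>
              \<bar>path_freq m M N s - path_freq m M N s'\<bar> \<ge> int (m (M + 1)))"
proof (intro ballI allI impI conjI)
  fix r c s s'
  assume vs: "valid_path M N r c s" and vs': "valid_path M N r c s'"
  from vs show "\<exists>k. \<forall>t. path_term A B m M N s t = k * exp (2 * pi * \<i> * of_int (path_freq m M N s) * t)"
    by (rule path_term_eq_exp)
  have doubling: "2 * m j \<le> m (Suc j)" if "j \<in> {M+1..<N}" for j
  proof -
    have "2 * real (m j) \<le> q * real (m j)" using q by (simp add: mult_right_mono)
    also have "\<dots> \<le> real (m (Suc j))" using m_lac that by simp
    finally show ?thesis by linarith
  qed
  assume "\<exists>j\<in>{M..N}. s j \<noteq> s' j"
  then have gap: "int (m (M + 1)) \<le> \<bar>path_freq m M N s - path_freq m M N s'\<bar>"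
    using path_freq_diff_abs_ge[OF vs vs' MN] doubling by blast
  then show "\<bar>path_freq m M N s - path_freq m M N s'\<bar> \<ge> int (m (M + 1))" .
  moreover have "m (M + 1) > 0" using m_pos by simp
  ultimately show "path_freq m M N s \<noteq> path_freq m M N s'" by auto
qed

end
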